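(* Let $n\geq 2$ be an integer and let $CCC(n)$ be the crystal cubic carbon graph with $n$ layers. Then the minimum cardinality of a doubly resolving set of $CCC(n)$ is $\psi(CCC(n))=24\times 7^{n-2}$.
   Context: All graphs are simple and connected; $d(u,v)$ is the shortest-path distance. For an ordered set $Z=\{z_1,\dots,z_m\}$ of vertices, $r(u\,|\,Z)=(d(u,z_1),\dots,d(u,z_m))$. $Z$ is a doubly resolving set of $G$ if for every two distinct vertices $u,v$ of $G$, $r(u|Z)-r(v|Z)\neq \mu(1,\dots,1)$ for every integer $\mu$; $\psi(G)$ denotes the minimum size of a doubly resolving set. The cube $C_4\Box P_2$ is the graph on $\{1,\dots,8\}$ with edges $12,23,34,14,56,67,78,58$ and $15,26,37,48$. The crystal cubic carbon $CCC(n)$ is constructed as follows. Its vertex set is partitioned into layers $L_1,\dots,L_n$. Layer $L_1$ is a copy of $C_4\Box P_2$ with vertices $1,\dots,8$. For $2\leq k\leq n$, layer $L_k$ consists of $8\times 7^{k-2}$ vertex-disjoint copies of $C_4\Box P_2$ (called cubes), each cube having a distinguished vertex (the vertex labelled $1$ in its copy) called its head vertex. Each vertex $r\in L_1$ is joined by an edge to the head vertex of exactly one cube of $L_2$ (distinct vertices of $L_1$ to distinct cubes). For $2\leq k<n$, each of the $7$ non-head vertices of each cube of $L_k$ is joined by an edge to the head vertex of exactly one cube of $L_{k+1}$, in such a way that every cube of $L_{k+1}$ has its head joined to exactly one such vertex. There are no other edges. Thus $CCC(n)$ has $8+64\sum_{k=2}^{n}7^{k-2}$ vertices. *)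

theory Defs
  imports Main
begin

definition gdist :: "('a \<Rightarrow> 'a \<Rightarrow> bool) \<Rightarrow> 'a \<Rightarrow> 'a \<Rightarrow> nat" where
  "gdist E u v = (LEAST k. (E ^^ k) u v)"

definition doubly_resolving :: "'a set \<Rightarrow> ('a \<Rightarrow> 'a \<Rightarrow> bool) \<Rightarrow> 'a set \<Rightarrow> bool" where
  "doubly_resolving V E Z \<longleftrightarrow> Z \<subseteq> V \<and>
     (\<forall>u\<in>V. \<forall>v\<in>V. u \<noteq> v \<longrightarrow>
        (\<forall>\<mu>::int. \<not> (\<forall>z\<in>Z. int (gdist E u z) - int (gdist E v z) = \<mu>)))"

definition psi :: "'a set \<Rightarrow> ('a \<Rightarrow> 'a \<Rightarrow> bool) \<Rightarrow> nat" where
  "psi V E = (LEAST k. \<exists>Z. finite Z \<and> card Z = k \<and> doubly_resolving V E Z)"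

definition cube_edges :: "(nat \<times> nat) set" where
  "cube_edges = {(1,2),(2,3),(3,4),(1,4),(5,6),(6,7),(7,8),(5,8),(1,5),(2,6),(3,7),(4,8)}"

definition cube_adj :: "nat \<Rightarrow> nat \<Rightarrow> bool" where
  "cube_adj i j \<longleftrightarrow> (i, j) \<in> cube_edges \<or> (j, i) \<in> cube_edges"

text \<open>A cube is addressed by a list p: [] is the cube of layer 1; a cube of
layer k \<ge> 2 is addressed by [r1, r2, ..., r_(k-1)] where r1 \<in> {1..8} is the
vertex of L1 it hangs from and r_j \<in> {2..8} (j \<ge> 2) is the non-head vertex of
its parent cube whose edge goes to its head (position 1).\<close>

definition ccc_addr :: "nat \<Rightarrow> nat list \<Rightarrow> bool" where
  "ccc_addr n p \<longleftrightarrow> length p < n \<and> (p \<noteq> [] \<longrightarrow> p ! 0 \<in> {1..8}) \<and>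
     (\<forall>j. 0 < j \<and> j < length p \<longrightarrow> p ! j \<in> {2..8})"

definition ccc_verts :: "nat \<Rightarrow> (nat list \<times> nat) set" where
  "ccc_verts n = {(p, i). ccc_addr n p \<and> i \<in> {1..8}}"

definition ccc_adj :: "nat \<Rightarrow> nat list \<times> nat \<Rightarrow> nat list \<times> nat \<Rightarrow> bool" where
  "ccc_adj n x y \<longleftrightarrow> x \<in> ccc_verts n \<and> y \<in> ccc_verts n \<and>
     ((fst x = fst y \<and> cube_adj (snd x) (snd y)) \<or>
      (fst y = fst x @ [snd x] \<and> snd y = 1) \<or>
      (fst x = fst y @ [snd y] \<and> snd x = 1))"

end

theory Submission
  imports Defs
begin

text \<open>A leaf cube (a cube of the last layer) is joined to the rest of CCC(n) by the single edge
  at its head, and distances inside it are those of the 3-cube. Hence a vertex outside a leaf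
  cube sees two of its positions i, j only through the head, at distance difference
  cube_dist i 1 - cube_dist j 1; a finite check on the cube shows that whatever two positions of
  the cube are occupied, some pair i \<noteq> j is not resolved by them. So a doubly resolving set
  meets each of the 8 * 7^(n-2) leaf cubes in at least three vertices.

  Conversely the positions 2, 4, 7 of all leaf cubes form a doubly resolving set. Pairs involving
  a leaf vertex are separated by finite checks on the cube. Every non-leaf vertex u is an end of
  a bridge of the tree of cubes, so for any v there is a leaf head on a geodesic from v through u;
  for two non-leaf vertices u, v this gives landmarks at which the distance differences are
  -d u v and d u v.\<close>

section \<open>Distances in connected graphs\<close>

lemma relpowp_sym:
  assumes "\<And>x y. E x y \<Longrightarrow> E y x" and "(E ^^ k) x y"
  shows "(E ^^ k) y x"
  using assms(2)
proof (induction k arbitrary: y)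
  case (Suc k)
  then obtain z where "(E ^^ k) x z" "E z y" by (blast elim: relpowp_Suc_E)
  with Suc.IH assms(1) show ?case by (meson relpowp_Suc_I2)
qed simp

lemma gdist_le: "(E ^^ k) x y \<Longrightarrow> gdist E x y \<le> k"
  unfolding gdist_def by (rule Least_le)

lemma lipschitz_le_walk:
  assumes "\<And>x y. E x y \<Longrightarrow> f x \<le> f y + 1" and "(E ^^ k) x y"
  shows "f x \<le> f y + (k::nat)"
  using assms(2)
proof (induction k arbitrary: x)
  case (Suc k)
  then obtain z where "E x z" "(E ^^ k) z y" by (blast elim: relpowp_Suc_E2)
  with Suc.IH assms(1) show ?case by fastforce
qed simp

lemma walk_leaving_set:
  assumes bridge: "\<And>x y. E x y \<Longrightarrow> x \<in> S \<Longrightarrow> y \<notin> S \<Longrightarrow> x = g \<and> y = g'"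
    and "(E ^^ k) a b" "a \<in> S" "b \<notin> S"
  shows "\<exists>k1 k2. k = k1 + 1 + k2 \<and> (E ^^ k1) a g \<and> (E ^^ k2) g' b"
  using assms(2-)
proof (induction k arbitrary: a)
  case (Suc k)
  then obtain y where y: "E a y" "(E ^^ k) y b" by (blast elim: relpowp_Suc_E2)
  show ?case
  proof (cases "y \<in> S")
    case True
    with Suc.IH y Suc.prems obtain k1 k2 where "k = k1 + 1 + k2" "(E ^^ k1) y g" "(E ^^ k2) g' b"
      by blast
    moreover have "(E ^^ Suc k1) a g" using y(1) \<open>(E ^^ k1) y g\<close> by (rule relpowp_Suc_I2)
    ultimately show ?thesis by (metis add_Suc)
  next
    case False
    with bridge y Suc.prems have "a = g" "y = g'" by auto
    with y show ?thesis by (intro exI[of _ 0] exI[of _ k]) simp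
  qed
qed simp

locale connected_graph =
  fixes V :: "'a set" and E :: "'a \<Rightarrow> 'a \<Rightarrow> bool"
  assumes adj_sym: "E x y \<Longrightarrow> E y x"
    and adj_in_V: "E x y \<Longrightarrow> x \<in> V"
    and connected: "x \<in> V \<Longrightarrow> y \<in> V \<Longrightarrow> E\<^sup>*\<^sup>* x y"
begin

abbreviation d :: "'a \<Rightarrow> 'a \<Rightarrow> nat" where "d \<equiv> gdist E"

lemma gdist_walk: "x \<in> V \<Longrightarrow> y \<in> V \<Longrightarrow> (E ^^ d x y) x y"
  unfolding gdist_def by (meson LeastI_ex connected rtranclp_imp_relpowp)

lemma gdist_sym: "d x y = d y x"
proof -
  have "(E ^^ k) x y \<longleftrightarrow> (E ^^ k) y x" for k using relpowp_sym adj_sym by metis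
  then show ?thesis unfolding gdist_def by simp
qed

lemma gdist_self [simp]: "d x x = 0"
  using gdist_le[where k=0] by simp

lemma gdist_pos: "x \<in> V \<Longrightarrow> y \<in> V \<Longrightarrow> x \<noteq> y \<Longrightarrow> 0 < d x y"
  using gdist_walk[of x y] by (metis gr0I relpowp_0_E)

lemma gdist_adj: "E x y \<Longrightarrow> d x y \<le> 1"
  by (metis gdist_le relpowp_1)

lemma gdist_triangle:
  assumes "x \<in> V" "y \<in> V" "z \<in> V"
  shows "d x z \<le> d x y + d y z"
proof -
  have "(E ^^ d x y OO E ^^ d y z) x z" using gdist_walk assms by blast
  then show ?thesis by (metis gdist_le relpowp_add)
qed

lemma lipschitz_le_gdist:
  assumes "\<And>x y. E x y \<Longrightarrow> f x \<le> f y + 1" "x \<in> V" "y \<in> V"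
  shows "f x \<le> f y + d x y"
  using lipschitz_le_walk[OF assms(1) gdist_walk[OF assms(2,3)]] .

lemma gdist_across_bridge:
  assumes bridge: "\<And>x y. E x y \<Longrightarrow> x \<in> S \<Longrightarrow> y \<notin> S \<Longrightarrow> x = g \<and> y = g'"
    and "E g g'" "S \<subseteq> V" "a \<in> S" "b \<in> V" "b \<notin> S"
  shows "d a b = d a g + 1 + d g' b"
proof (rule antisym)
  have gV: "g \<in> V" "g' \<in> V" using \<open>E g g'\<close> adj_in_V adj_sym by blast+
  have aV: "a \<in> V" using assms by blast
  have "d a b \<le> d a g + d g b" using gdist_triangle[OF aV gV(1) \<open>b \<in> V\<close>] .
  also have "d g b \<le> d g g' + d g' b" using gdist_triangle[OF gV \<open>b \<in> V\<close>] .
  also have "d g g' \<le> 1" using gdist_adj \<open>E g g'\<close> .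
  finally show "d a b \<le> d a g + 1 + d g' b" by simp
  obtain k1 k2 where k: "d a b = k1 + 1 + k2" "(E ^^ k1) a g" "(E ^^ k2) g' b"
    using walk_leaving_set[where S=S and g=g and g'=g', OF bridge gdist_walk[OF aV \<open>b \<in> V\<close>]]
      \<open>a \<in> S\<close> \<open>b \<notin> S\<close> by blast
  moreover have "d a g \<le> k1" using k(2) by (rule gdist_le)
  moreover have "d g' b \<le> k2" using k(3) by (rule gdist_le)
  ultimately show "d a g + 1 + d g' b \<le> d a b" by linarith
qed

lemma gdist_through_bridge_end:
  assumes bridge: "\<And>x y. E x y \<Longrightarrow> x \<in> S \<Longrightarrow> y \<notin> S \<Longrightarrow> x = g \<and> y = g'"
    and "E g g'" "g \<in> S" "g' \<notin> S" "S \<subseteq> V" "u \<in> {g, g'}"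
    and "a \<in> S" "b \<in> V" "b \<notin> S"
  shows "d a b = d a u + d u b"
proof -
  have gV: "g' \<in> V" using \<open>E g g'\<close> adj_in_V adj_sym by blast
  have across: "d x y = d x g + 1 + d g' y" if "x \<in> S" "y \<in> V" "y \<notin> S" for x y
    using gdist_across_bridge[where S=S and g=g and g'=g', OF bridge \<open>E g g'\<close> \<open>S \<subseteq> V\<close> that] .
  show ?thesis
    using \<open>u \<in> {g, g'}\<close> across[OF \<open>a \<in> S\<close> \<open>b \<in> V\<close> \<open>b \<notin> S\<close>]
      across[OF \<open>g \<in> S\<close> \<open>b \<in> V\<close> \<open>b \<notin> S\<close>] across[OF \<open>a \<in> S\<close> gV \<open>g' \<notin> S\<close>]
    by auto
qed

end

section \<open>Doubly resolving sets\<close>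

definition doubly_resolves :: "('a \<Rightarrow> 'a \<Rightarrow> bool) \<Rightarrow> 'a set \<Rightarrow> 'a \<Rightarrow> 'a \<Rightarrow> bool" where
  "doubly_resolves E Z u v \<longleftrightarrow>
     (\<exists>z1\<in>Z. \<exists>z2\<in>Z.
        int (gdist E u z1) - int (gdist E v z1) \<noteq> int (gdist E u z2) - int (gdist E v z2))"

lemma doubly_resolving_iff:
  "doubly_resolving V E Z \<longleftrightarrow> Z \<subseteq> V \<and> (\<forall>u\<in>V. \<forall>v\<in>V. u \<noteq> v \<longrightarrow> doubly_resolves E Z u v)"
proof -
  have "(\<forall>\<mu>. \<not> (\<forall>z\<in>Z. f z = \<mu>)) \<longleftrightarrow> (\<exists>z1\<in>Z. \<exists>z2\<in>Z. f z1 \<noteq> f z2)" for f :: "'a \<Rightarrow> int"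
    by metis
  then show ?thesis unfolding doubly_resolving_def doubly_resolves_def by simp
qed

lemma doubly_resolves_sym: "doubly_resolves E Z u v \<Longrightarrow> doubly_resolves E Z v u"
  unfolding doubly_resolves_def by (metis minus_diff_eq)

lemma subset_pair_if_card_le_2:
  assumes "finite K" "card K \<le> 2" "K \<subseteq> A" "a \<in> A"
  shows "\<exists>x\<in>A. \<exists>y\<in>A. K \<subseteq> {x, y}"
proof -
  consider "card K = 0" | "card K = 1" | "card K = 2" using assms(2) by linarith
  then show ?thesis
  proof cases
    case 1
    then show ?thesis using assms by auto
  next
    case 2
    then show ?thesis using assms by (auto simp: card_1_singleton_iff)
  next
    case 3
    then show ?thesis using assms by (auto simp: card_2_iff)
  qed
qed

section \<open>The cube C4 x P2\<close>

text \<open>Positions 1 2 3 4 and 5 6 7 8 (the two squares) are read as vertices of {0,1}^3 with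
  coordinates (i \<in> {2,3,6,7}, i \<in> {3,4,7,8}, 5 \<le> i); cube_dist is their Hamming distance.\<close>

definition cube_dist :: "nat \<Rightarrow> nat \<Rightarrow> nat" where
  "cube_dist i k =
     (if (i \<in> {2,3,6,7}) = (k \<in> {2,3,6,7}) then 0 else 1) +
     (if (i \<in> {3,4,7,8}) = (k \<in> {3,4,7,8}) then 0 else 1) +
     (if (5 \<le> i) = (5 \<le> k) then 0 else 1)"

lemma cube_dist_sym: "cube_dist i k = cube_dist k i"
  unfolding cube_dist_def by auto

lemma cube_dist_self [simp]: "cube_dist i i = 0"
  unfolding cube_dist_def by simp

lemma cube_positions_eq: "{1..8::nat} = {1,2,3,4,5,6,7,8}"
  by auto

lemma cube_dist_adj:
  "\<forall>i\<in>{1..8}. \<forall>j\<in>{1..8}. \<forall>k\<in>{1..8}. cube_adj i j \<longrightarrow> cube_dist i k \<le> cube_dist j k + 1"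
  unfolding cube_positions_eq by (simp add: cube_adj_def cube_edges_def cube_dist_def)

lemma cube_dist_step:
  "\<forall>i\<in>{1..8}. \<forall>k\<in>{1..8}. i \<noteq> k \<longrightarrow> (\<exists>j\<in>{1..8}. cube_adj i j \<and> cube_dist j k + 1 = cube_dist i k)"
  unfolding cube_positions_eq by (simp add: cube_adj_def cube_edges_def cube_dist_def)

lemma cube_twins:
  "\<forall>a\<in>{1..8}. \<forall>b\<in>{1..8}. \<exists>i\<in>{1..8}. \<exists>j\<in>{1..8}. i \<noteq> j \<and>
    (\<forall>k\<in>{a,b}. int (cube_dist i k) - int (cube_dist j k) = int (cube_dist i 1) - int (cube_dist j 1))"
  unfolding cube_positions_eq by (simp add: cube_dist_def)

lemma cube_resolved:
  "\<forall>i\<in>{1..8}. \<forall>j\<in>{1..8}. i \<noteq> j \<longrightarrow>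
    (\<exists>k\<in>{2,4,7}. int (cube_dist i k) - int (cube_dist j k) \<noteq> int (cube_dist i 1) - int (cube_dist j 1))"
  unfolding cube_positions_eq by (simp add: cube_dist_def)

lemma cube_resolved_from_outside:
  "\<forall>i\<in>{2..8}. \<exists>k\<in>{4,7}. int (cube_dist i k) - int (cube_dist k 1) \<noteq> int (cube_dist i 2) - int (cube_dist 2 1)"
  by (simp add: cube_dist_def)

section \<open>Crystal cubic carbon\<close>

lemma ccc_addr_Nil [simp]: "ccc_addr n [] \<longleftrightarrow> 0 < n"
  by (simp add: ccc_addr_def)

lemma ccc_addr_Cons [simp]:
  "ccc_addr n (x # r) \<longleftrightarrow> Suc (length r) < n \<and> x \<in> {1..8} \<and> set r \<subseteq> {2..8}"
  unfolding ccc_addr_def by (auto simp: set_conv_nth gr0_conv_Suc)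

lemma ccc_addr_snoc:
  "ccc_addr n (p @ [i]) \<longleftrightarrow> Suc (length p) < n \<and> (if p = [] then i \<in> {1..8} else ccc_addr n p \<and> i \<in> {2..8})"
  by (cases p) auto

lemma ccc_addr_length: "ccc_addr n p \<Longrightarrow> length p < n"
  by (simp add: ccc_addr_def)

lemma ccc_addr_prefix: "ccc_addr n (c @ r) \<Longrightarrow> ccc_addr n c"
  by (cases c) (auto dest: ccc_addr_length)

lemma ccc_addr_butlast: "ccc_addr n c \<Longrightarrow> c \<noteq> [] \<Longrightarrow> ccc_addr n (butlast c) \<and> last c \<in> {1..8}"
  using ccc_addr_snoc[of n "butlast c" "last c"] by (auto split: if_splits)

locale crystal_cubic_carbon =
  fixes n :: nat
  assumes two_layers: "2 \<le> n"
begin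

abbreviation V :: "(nat list \<times> nat) set" where "V \<equiv> ccc_verts n"
abbreviation E :: "nat list \<times> nat \<Rightarrow> nat list \<times> nat \<Rightarrow> bool" where "E \<equiv> ccc_adj n"

lemma in_V [simp]: "(p, i) \<in> V \<longleftrightarrow> ccc_addr n p \<and> i \<in> {1..8}"
  by (simp add: ccc_verts_def)

lemma adj_sym: "E x y \<Longrightarrow> E y x"
  by (auto simp: ccc_adj_def cube_adj_def)

lemma cube_walk:
  assumes "ccc_addr n p" "i \<in> {1..8}" "k \<in> {1..8}"
  shows "(E ^^ cube_dist i k) (p, i) (p, k)"
  using assms(2)
proof (induction "cube_dist i k" arbitrary: i)
  case 0
  then show ?case using cube_dist_step assms(3) by fastforce
next
  case (Suc m)
  then obtain j where j: "j \<in> {1..8}" "cube_adj i j" "cube_dist j k + 1 = cube_dist i k"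
    using cube_dist_step assms(3) by (metis cube_dist_self nat.distinct(1))
  with Suc have "(E ^^ m) (p, j) (p, k)" by (metis Suc_eq_plus1 nat.inject)
  moreover have "E (p, i) (p, j)" using j Suc.prems assms(1) by (simp add: ccc_adj_def)
  ultimately show ?case using Suc.hyps(2) by (metis relpowp_Suc_I2)
qed

lemma parent_adj: "ccc_addr n c \<Longrightarrow> c \<noteq> [] \<Longrightarrow> E (c, 1) (butlast c, last c)"
  using ccc_addr_butlast by (simp add: ccc_adj_def ccc_verts_def)

lemma connected_to_root: "ccc_addr n p \<Longrightarrow> i \<in> {1..8} \<Longrightarrow> E\<^sup>*\<^sup>* (p, i) ([], 1)"
proof (induction "length p" arbitrary: p i)
  case 0
  then show ?case using cube_walk[of "[]" i 1] by (auto dest: relpowp_imp_rtranclp)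
next
  case (Suc m)
  then have "p \<noteq> []" by auto
  have "E\<^sup>*\<^sup>* (p, i) (p, 1)" using cube_walk[of p i 1] Suc.prems by (auto dest: relpowp_imp_rtranclp)
  moreover have "E (p, 1) (butlast p, last p)" using parent_adj Suc.prems \<open>p \<noteq> []\<close> by blast
  moreover have "E\<^sup>*\<^sup>* (butlast p, last p) ([], 1)"
    using Suc ccc_addr_butlast \<open>p \<noteq> []\<close> by simp
  ultimately show ?case by (meson converse_rtranclp_into_rtranclp rtranclp_trans)
qed

end

sublocale crystal_cubic_carbon \<subseteq> connected_graph "ccc_verts n" "ccc_adj n"
proof
  fix x y
  show "E x y \<Longrightarrow> E y x" by (rule adj_sym)
  show "E x y \<Longrightarrow> x \<in> V" by (simp add: ccc_adj_def)
  assume "x \<in> V" "y \<in> V"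
  then have "E\<^sup>*\<^sup>* x ([], 1)" "E\<^sup>*\<^sup>* y ([], 1)"
    using connected_to_root by (auto simp: ccc_verts_def)
  moreover have "symp E\<^sup>*\<^sup>*" using adj_sym by (intro symp_rtranclp sympI)
  ultimately show "E\<^sup>*\<^sup>* x y" by (metis sympD rtranclp_trans)
qed

context crystal_cubic_carbon
begin

definition subtree :: "nat list \<Rightarrow> (nat list \<times> nat) set" where
  "subtree c = {x \<in> V. \<exists>r. fst x = c @ r}"

lemma subtree_bridge:
  assumes "E x y" "x \<in> subtree c" "y \<notin> subtree c"
  shows "x = (c, 1) \<and> y = (butlast c, last c)"
proof -
  obtain p i q j where xy: "x = (p, i)" "y = (q, j)" by fastforce
  obtain r where p: "p = c @ r" using assms(2) xy by (auto simp: subtree_def)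
  have "y \<in> V" using assms(1) adj_in_V adj_sym by blast
  then have q: "\<And>r'. q \<noteq> c @ r'" using assms(3) xy by (auto simp: subtree_def)
  have "(p = q \<and> cube_adj i j) \<or> (q = p @ [i] \<and> j = 1) \<or> (p = q @ [j] \<and> i = 1)"
    using assms(1) xy by (simp add: ccc_adj_def)
  with p q have pq: "p = q @ [j]" "i = 1" by auto
  have "r = []"
  proof (rule ccontr)
    assume "r \<noteq> []"
    then obtain r' t where "r = r' @ [t]" by (metis rev_exhaust)
    with p pq q show False by simp
  qed
  with p pq xy show ?thesis by auto
qed

lemma gdist_leave_subtree:
  assumes "c \<noteq> []" "a \<in> subtree c" "b \<in> V" "b \<notin> subtree c"
  shows "d a b = d a (c, 1) + 1 + d (butlast c, last c) b"
proof -
  have "ccc_addr n c" using assms(2) by (auto simp: subtree_def ccc_verts_def intro: ccc_addr_prefix)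
  moreover have "subtree c \<subseteq> V" by (auto simp: subtree_def)
  ultimately show ?thesis
    using gdist_across_bridge[where S="subtree c", OF subtree_bridge parent_adj] assms by blast
qed

definition leaf :: "nat list \<Rightarrow> bool" where
  "leaf L \<longleftrightarrow> ccc_addr n L \<and> length L = n - 1"

lemma leaf_not_Nil: "leaf L \<Longrightarrow> L \<noteq> []"
  using two_layers by (auto simp: leaf_def)

lemma leaf_ccc_addr: "leaf L \<Longrightarrow> ccc_addr n L"
  by (simp add: leaf_def)

lemma leaf_in_V: "leaf L \<Longrightarrow> i \<in> {1..8} \<Longrightarrow> (L, i) \<in> V"
  by (simp add: leaf_def)

lemma subtree_leaf:
  assumes "leaf L"
  shows "x \<in> subtree L \<longleftrightarrow> x \<in> V \<and> fst x = L"
proof -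
  have "r = []" if "x \<in> V" "fst x = L @ r" for r
  proof -
    have "length (L @ r) < n" using that by (cases x) (auto dest: ccc_addr_length)
    then show ?thesis using assms two_layers by (cases r) (auto simp: leaf_def)
  qed
  then show ?thesis by (auto simp: subtree_def)
qed

lemma gdist_in_leaf_cube:
  assumes "leaf L" "i \<in> {1..8}" "k \<in> {1..8}"
  shows "d (L, i) (L, k) = cube_dist i k"
proof (rule antisym)
  show "d (L, i) (L, k) \<le> cube_dist i k"
    using cube_walk[of L i k] assms by (simp add: leaf_def gdist_le)
  define f where "f x = (if fst x = L then cube_dist (snd x) k else cube_dist 1 k + 1)" for x
  have lip: "f x \<le> f y + 1" if "E x y" for x y
  proof -
    obtain p a q b where xy: "x = (p, a)" "y = (q, b)" by fastforce
    have "(p, a) \<in> V" "(q, b) \<in> V" using that xy adj_in_V adj_sym by blast+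
    then have "length p < n" "length q < n" "a \<in> {1..8}" "b \<in> {1..8}"
      by (auto dest: ccc_addr_length)
    moreover have "(p = q \<and> cube_adj a b) \<or> (q = p @ [a] \<and> b = 1) \<or> (p = q @ [b] \<and> a = 1)"
      using that xy by (simp add: ccc_adj_def)
    ultimately show ?thesis
      using \<open>leaf L\<close> \<open>k \<in> {1..8}\<close> cube_dist_adj xy by (auto simp: f_def leaf_def)
  qed
  have "f (L, i) \<le> f (L, k) + d (L, i) (L, k)"
    using lipschitz_le_gdist[where f=f, OF lip leaf_in_V[OF assms(1,2)] leaf_in_V[OF assms(1,3)]] .
  then show "cube_dist i k \<le> d (L, i) (L, k)" by (simp add: f_def)
qed

lemma gdist_from_leaf_cube:
  assumes "leaf L" "i \<in> {1..8}" "y \<in> V" "fst y \<noteq> L"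
  shows "d (L, i) y = cube_dist i 1 + d (L, 1) y"
proof -
  have "y \<notin> subtree L" "(L, i) \<in> subtree L" "(L, 1) \<in> subtree L"
    using subtree_leaf[OF assms(1)] leaf_in_V[OF assms(1)] assms(2,4) by auto
  then show ?thesis
    using gdist_leave_subtree[OF leaf_not_Nil[OF assms(1)] _ assms(3)]
      gdist_in_leaf_cube[OF assms(1,2)] by simp
qed

lemma leaf_in_subtree:
  assumes "ccc_addr n c"
  obtains L where "leaf L" "(L, 1) \<in> subtree c"
proof -
  define L where "L = c @ replicate (n - 1 - length c) 2"
  have "length c < n" using assms by (rule ccc_addr_length)
  then have len: "length L = n - 1" by (simp add: L_def)
  have "ccc_addr n L"
  proof (cases c)
    case Nil
    then have "L = 2 # replicate (n - 2) 2"
      using two_layers by (simp add: L_def flip: replicate_Suc)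
    then show ?thesis using two_layers by auto
  next
    case (Cons x r)
    then have "L = x # (r @ replicate (n - 1 - length c) 2)" by (simp add: L_def)
    then show ?thesis using assms len Cons two_layers by auto
  qed
  with len have "leaf L" by (simp add: leaf_def)
  moreover have "(L, 1) \<in> subtree c" using \<open>ccc_addr n L\<close> by (simp add: subtree_def L_def)
  ultimately show ?thesis by (rule that)
qed

lemma leaf_outside_subtree:
  assumes "c \<noteq> []"
  obtains L where "leaf L" "(L, 1) \<notin> subtree c"
proof -
  define L where "L = (if hd c = 1 then 2 else 1) # replicate (n - 2) (2::nat)"
  have "leaf L" using two_layers by (auto simp: leaf_def L_def)
  moreover have "L \<noteq> c @ r" for r
  proof
    assume "L = c @ r"
    then have "hd L = hd c" using assms by simp
    then show False by (simp add: L_def split: if_splits)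
  qed
  then have "(L, 1) \<notin> subtree c" by (simp add: subtree_def)
  ultimately show ?thesis by (rule that)
qed

lemma non_leaf_bridge:
  assumes "(p, i) \<in> V" "\<not> leaf p"
  obtains c where "c \<noteq> []" "ccc_addr n c" "(p, i) \<in> {(c, 1), (butlast c, last c)}"
proof (cases "p \<noteq> [] \<and> i = 1")
  case True
  then show ?thesis using that[of p] assms by auto
next
  case False
  have "length p < n" "length p \<noteq> n - 1" using assms by (auto simp: leaf_def dest: ccc_addr_length)
  then have "ccc_addr n (p @ [i])" using assms False by (auto simp: ccc_addr_snoc)
  then show ?thesis using that[of "p @ [i]"] by simp
qed

lemma geodesic_through_non_leaf:
  assumes "u \<in> V" "\<not> leaf (fst u)" "v \<in> V"
  shows "\<exists>L. leaf L \<and> d v (L, 1) = d v u + d u (L, 1)"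
proof -
  obtain c where c: "c \<noteq> []" "ccc_addr n c" "u \<in> {(c, 1), (butlast c, last c)}"
    using non_leaf_bridge[of "fst u" "snd u"] assms by auto
  have "length (butlast c) < length (c @ r)" for r using c(1) by (cases c) auto
  then have "butlast c \<noteq> c @ r" for r by (metis less_irrefl)
  then have S: "subtree c \<subseteq> V" "(c, 1) \<in> subtree c" "(butlast c, last c) \<notin> subtree c"
    using c(2) by (auto simp: subtree_def)
  have through: "d a b = d a u + d u b" if "a \<in> subtree c" "b \<in> V" "b \<notin> subtree c" for a b
    using gdist_through_bridge_end[where S="subtree c", OF subtree_bridge parent_adj[OF c(2,1)]
        S(2,3,1) c(3) that] .
  show ?thesis
  proof (cases "v \<in> subtree c")
    case True
    obtain L where "leaf L" "(L, 1) \<notin> subtree c" using leaf_outside_subtree c(1) .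
    then show ?thesis using through[OF True leaf_in_V] by auto
  next
    case False
    obtain L where "leaf L" "(L, 1) \<in> subtree c" using leaf_in_subtree c(2) .
    then have "d (L, 1) v = d (L, 1) u + d u v" using through[OF _ assms(3) False] by blast
    then show ?thesis using \<open>leaf L\<close> gdist_sym by (metis add.commute)
  qed
qed

section \<open>The landmark set\<close>

definition landmarks :: "(nat list \<times> nat) set" where
  "landmarks = {L. leaf L} \<times> {2, 4, 7}"

lemma landmarks_resolve_leaf_cube:
  assumes "leaf L" "i \<in> {1..8}" "j \<in> {1..8}" "i \<noteq> j"
  shows "doubly_resolves E landmarks (L, i) (L, j)"
proof -
  define D where "D z = int (d (L, i) z) - int (d (L, j) z)" for z
  obtain L' where L': "leaf L'" "(L', 1) \<notin> subtree L"
    using leaf_outside_subtree leaf_not_Nil[OF assms(1)] .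
  then have "L' \<noteq> L" using subtree_leaf[OF assms(1)] leaf_ccc_addr by auto
  moreover have "(L', 2) \<in> V" using leaf_ccc_addr L'(1) by simp
  ultimately have far: "D (L', 2) = int (cube_dist i 1) - int (cube_dist j 1)"
    using gdist_from_leaf_cube[OF assms(1) assms(2)] gdist_from_leaf_cube[OF assms(1) assms(3)]
    by (simp add: D_def)
  obtain k where k: "k \<in> {2, 4, 7}"
    "int (cube_dist i k) - int (cube_dist j k) \<noteq> int (cube_dist i 1) - int (cube_dist j 1)"
    using cube_resolved assms(2-4) by blast
  then have "k \<in> {1..8}" by auto
  then have "D (L, k) = int (cube_dist i k) - int (cube_dist j k)"
    using gdist_in_leaf_cube[OF assms(1)] assms(2,3) by (simp add: D_def)
  with far k(2) have "D (L, k) \<noteq> D (L', 2)" by simp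
  moreover have "(L, k) \<in> landmarks" "(L', 2) \<in> landmarks"
    using k(1) assms(1) L'(1) by (auto simp: landmarks_def)
  ultimately show ?thesis unfolding doubly_resolves_def D_def by blast
qed

lemma landmarks_resolve_leaf_vertex:
  assumes "leaf L" "i \<in> {1..8}" "v \<in> V" "fst v \<noteq> L"
  shows "doubly_resolves E landmarks (L, i) v"
proof -
  define D where "D z = int (d (L, i) z) - int (d v z)" for z
  have near: "D (L, k) = int (cube_dist i k) - int (cube_dist k 1) - int (d (L, 1) v)"
    if "k \<in> {1..8}" for k
    using gdist_in_leaf_cube[OF assms(1,2) that] gdist_from_leaf_cube[OF assms(1) that assms(3,4)]
    by (simp add: D_def gdist_sym[of v])
  have "(L, 2) \<in> landmarks" using assms(1) by (simp add: landmarks_def)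
  show ?thesis
  proof (cases "i = 1")
    case False
    then obtain k where k: "k \<in> {4, 7}"
      "int (cube_dist i k) - int (cube_dist k 1) \<noteq> int (cube_dist i 2) - int (cube_dist 2 1)"
      using cube_resolved_from_outside assms(2) by fastforce
    then have "D (L, k) \<noteq> D (L, 2)" using near by auto
    moreover have "(L, k) \<in> landmarks" using k(1) assms(1) by (auto simp: landmarks_def)
    ultimately show ?thesis using \<open>(L, 2) \<in> landmarks\<close> unfolding doubly_resolves_def D_def by blast
  next
    case True
    \<comment> \<open>(L, 1) reaches everything outside its cube through its parent p, so
      D (L', 2) \<ge> 1 - d p v > -1 - d p v = D (L, 2).\<close>
    define p where "p = (butlast L, last L)"
    obtain L' where L': "leaf L'" "(L', 1) \<notin> subtree L"
      using leaf_outside_subtree leaf_not_Nil[OF assms(1)] .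
    have out: "(L', 2) \<in> V" "(L', 2) \<notin> subtree L" "v \<notin> subtree L"
      using L' subtree_leaf[OF assms(1)] leaf_ccc_addr assms(3,4) by auto
    have head: "(L, 1) \<in> subtree L" using subtree_leaf[OF assms(1)] leaf_ccc_addr[OF assms(1)] by simp
    have "d (L, 1) (L', 2) = 1 + d p (L', 2)" "d (L, 1) v = 1 + d p v"
      using gdist_leave_subtree[OF leaf_not_Nil[OF assms(1)] head] out assms(3) by (simp_all add: p_def)
    moreover have "E p (L, 1)"
      using parent_adj leaf_ccc_addr leaf_not_Nil assms(1) adj_sym by (simp add: p_def)
    then have "p \<in> V" by (rule adj_in_V)
    then have "d v (L', 2) \<le> d v p + d p (L', 2)" using gdist_triangle assms(3) out(1) by blast
    ultimately have "D (L', 2) \<noteq> D (L, 2)"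
      using near[of 2] True cube_dist_sym[of 1 2] by (simp add: D_def gdist_sym[of v])
    moreover have "(L', 2) \<in> landmarks" using L'(1) by (simp add: landmarks_def)
    ultimately show ?thesis using \<open>(L, 2) \<in> landmarks\<close> unfolding doubly_resolves_def D_def by blast
  qed
qed

lemma landmarks_resolve_non_leaves:
  assumes "u \<in> V" "v \<in> V" "u \<noteq> v" "\<not> leaf (fst u)" "\<not> leaf (fst v)"
  shows "doubly_resolves E landmarks u v"
proof -
  have to_leaf: "d x (L, 2) = d x (L, 1) + cube_dist 1 2" if "leaf L" "x \<in> V" "\<not> leaf (fst x)" for L x
  proof -
    have "fst x \<noteq> L" using that(1,3) by auto
    then show ?thesis
      using gdist_from_leaf_cube[OF that(1), of 2 x] that(2) by (simp add: gdist_sym[of x] cube_dist_sym)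
  qed
  obtain L1 where L1: "leaf L1" "d v (L1, 1) = d v u + d u (L1, 1)"
    using geodesic_through_non_leaf assms(1,2,4) by blast
  obtain L2 where L2: "leaf L2" "d u (L2, 1) = d u v + d v (L2, 1)"
    using geodesic_through_non_leaf assms(1,2,5) by blast
  have "int (d u (L1, 2)) - int (d v (L1, 2)) = - int (d u v)"
    using to_leaf[OF L1(1)] L1(2) assms gdist_sym[of u v] by simp
  moreover have "int (d u (L2, 2)) - int (d v (L2, 2)) = int (d u v)"
    using to_leaf[OF L2(1)] L2(2) assms by simp
  moreover have "0 < d u v" using gdist_pos assms(1-3) .
  moreover have "(L1, 2) \<in> landmarks" "(L2, 2) \<in> landmarks" using L1(1) L2(1) by (auto simp: landmarks_def)
  ultimately show ?thesis unfolding doubly_resolves_def by (metis neg_0_less_iff_less of_nat_0_less_iff order.asym)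
qed

lemma landmarks_doubly_resolving: "doubly_resolving V E landmarks"
  unfolding doubly_resolving_iff
proof (intro conjI ballI impI)
  show "landmarks \<subseteq> V" by (auto simp: landmarks_def leaf_ccc_addr)
  fix u v assume uv: "u \<in> V" "v \<in> V" "u \<noteq> v"
  have resolve_from_leaf: "doubly_resolves E landmarks x y"
    if "leaf (fst x)" "x \<in> V" "y \<in> V" "x \<noteq> y" for x y
  proof (cases "fst y = fst x")
    case True
    then show ?thesis using landmarks_resolve_leaf_cube[OF that(1)] that(2-4)
      by (cases x, cases y) auto
  next
    case False
    then show ?thesis using landmarks_resolve_leaf_vertex[OF that(1) _ that(3)] that(2)
      by (cases x) auto
  qed
  consider "leaf (fst u)" | "leaf (fst v)" | "\<not> leaf (fst u)" "\<not> leaf (fst v)" by blast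
  then show "doubly_resolves E landmarks u v"
  proof cases
    case 1
    then show ?thesis using resolve_from_leaf uv by blast
  next
    case 2
    then show ?thesis using resolve_from_leaf uv doubly_resolves_sym by metis
  next
    case 3
    then show ?thesis using landmarks_resolve_non_leaves uv by blast
  qed
qed

lemma leaves_eq:
  "{L. leaf L} = (\<lambda>(x, r). x # r) ` ({1..8} \<times> {r. set r \<subseteq> {2..8} \<and> length r = n - 2})"
proof -
  have "leaf L \<longleftrightarrow> (\<exists>x r. L = x # r \<and> x \<in> {1..8} \<and> set r \<subseteq> {2..8} \<and> length r = n - 2)" for L
    using two_layers by (cases L) (auto simp: leaf_def)
  then show ?thesis by auto
qed

lemma finite_leaves: "finite {L. leaf L}"
  unfolding leaves_eq by (intro finite_imageI finite_cartesian_product finite_lists_length_eq) auto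

lemma card_leaves: "card {L. leaf L} = 8 * 7 ^ (n - 2)"
proof -
  have "inj (\<lambda>(x, r). x # r :: nat list)" by (auto simp: inj_def)
  then have "card {L. leaf L} = card ({1..8::nat} \<times> {r. set r \<subseteq> {2..8::nat} \<and> length r = n - 2})"
    unfolding leaves_eq by (simp add: card_image inj_on_subset)
  also have "\<dots> = 8 * 7 ^ (n - 2)" by (simp add: card_cartesian_product card_lists_length_eq)
  finally show ?thesis .
qed

lemma card_landmarks: "card landmarks = 24 * 7 ^ (n - 2)"
  using card_leaves by (simp add: landmarks_def card_cartesian_product)

lemma finite_landmarks: "finite landmarks"
  using finite_leaves by (simp add: landmarks_def)

section \<open>Lower bound\<close>

lemma doubly_resolving_meets_leaf_cube:
  assumes Z: "doubly_resolving V E Z" and L: "leaf L"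
  shows "3 \<le> card {z \<in> Z. fst z = L}"
proof (rule ccontr)
  define K where "K = snd ` {z \<in> Z. fst z = L}"
  have ZV: "Z \<subseteq> V" using Z by (simp add: doubly_resolving_def)
  then have "{z \<in> Z. fst z = L} \<subseteq> {L} \<times> {1..8}" by auto
  then have fin: "finite {z \<in> Z. fst z = L}" by (rule finite_subset) simp
  assume "\<not> 3 \<le> card {z \<in> Z. fst z = L}"
  then have "card K \<le> 2" using card_image_le[OF fin, of snd] by (simp add: K_def)
  moreover have "K \<subseteq> {1..8}" using ZV by (auto simp: K_def)
  moreover have "finite K" using fin by (simp add: K_def)
  ultimately obtain a b where ab: "a \<in> {1..8}" "b \<in> {1..8}" "K \<subseteq> {a, b}"
    using subset_pair_if_card_le_2[of K "{1..8}" 1] by auto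
  obtain i j where ij: "i \<in> {1..8}" "j \<in> {1..8}" "i \<noteq> j"
    "\<forall>k\<in>{a, b}. int (cube_dist i k) - int (cube_dist j k) = int (cube_dist i 1) - int (cube_dist j 1)"
    using cube_twins[rule_format, OF ab(1,2)] by blast
  have const: "int (d (L, i) z) - int (d (L, j) z) = int (cube_dist i 1) - int (cube_dist j 1)"
    if "z \<in> Z" for z
  proof (cases "fst z = L")
    case True
    then obtain k where z: "z = (L, k)" by (cases z) simp
    have "snd z \<in> K" unfolding K_def using that True by (intro imageI) simp
    then have k: "k \<in> {a, b}" using ab(3) z by auto
    have "(L, k) \<in> V" using that ZV z by blast
    then show ?thesis
      using ij(4)[rule_format, OF k] gdist_in_leaf_cube[OF L ij(1)] gdist_in_leaf_cube[OF L ij(2)] z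
      by simp
  next
    case False
    have "z \<in> V" using ZV that by (rule subsetD)
    then show ?thesis
      using gdist_from_leaf_cube[OF L ij(1) _ False] gdist_from_leaf_cube[OF L ij(2) _ False] by simp
  qed
  have "(L, i) \<in> V" "(L, j) \<in> V" using leaf_in_V[OF L] ij(1,2) by auto
  then have "doubly_resolves E Z (L, i) (L, j)" using Z ij(3) by (simp add: doubly_resolving_iff)
  then obtain z1 z2 where "z1 \<in> Z" "z2 \<in> Z"
    "int (d (L, i) z1) - int (d (L, j) z1) \<noteq> int (d (L, i) z2) - int (d (L, j) z2)"
    unfolding doubly_resolves_def by blast
  then show False using const by simp
qed

lemma card_doubly_resolving_ge:
  assumes "doubly_resolving V E Z" "finite Z"
  shows "24 * 7 ^ (n - 2) \<le> card Z"
proof -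
  define Z\<^sub>L where "Z\<^sub>L L = {z \<in> Z. fst z = L}" for L
  have "3 * card {L. leaf L} = (\<Sum>L\<in>{L. leaf L}. 3)" by simp
  also have "\<dots> \<le> (\<Sum>L\<in>{L. leaf L}. card (Z\<^sub>L L))"
    using doubly_resolving_meets_leaf_cube[OF assms(1)] by (intro sum_mono) (simp add: Z\<^sub>L_def)
  also have "\<dots> = card (\<Union>L\<in>{L. leaf L}. Z\<^sub>L L)"
    using finite_leaves assms(2) by (intro card_UN_disjoint[symmetric]) (auto simp: Z\<^sub>L_def)
  also have "\<dots> \<le> card Z" using assms(2) by (intro card_mono) (auto simp: Z\<^sub>L_def)
  finally show ?thesis using card_leaves by simp
qed

end

theorem theorem1:
  fixes n :: nat
  assumes "n \<ge> 2"
  shows "psi (ccc_verts n) (ccc_adj n) = 24 * 7 ^ (n - 2)"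
proof -
  interpret crystal_cubic_carbon n using assms by unfold_locales
  show ?thesis unfolding psi_def
  proof (rule Least_equality)
    show "\<exists>Z. finite Z \<and> card Z = 24 * 7 ^ (n - 2) \<and> doubly_resolving V E Z"
      using finite_landmarks card_landmarks landmarks_doubly_resolving by blast
  qed (use card_doubly_resolving_ge in blast)
qed

end
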